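(* Let $D=\sum_{m=-\infty}^{M}\sum_{k=-\infty}^{K}C_{km}x^k(d/dx)^m\in\Psi\mathfrak D$ with $C_{KM}\ne0$. Then $D$ is invertible in $\Psi\mathfrak D$.
   Context: $\Psi\mathfrak D$ is the algebra of all formal series $\sum_{m=-\infty}^{M}\sum_{k=-\infty}^{K}C_{km}x^k(d/dx)^m$ with $C_{km}\in\mathbb C$ and integers $M,K$ depending on the series, with multiplication determined by $(d/dx)^m x^k=\sum_{j\ge0}\frac{(m)_j(k)_j}{j!}x^{k-j}(d/dx)^{m-j}$ for $m,k\in\mathbb Z$, where $(a)_j=a(a-1)\cdots(a-j+1)$. *)

theory Defs
  imports Complex_Main "HOL-Library.Groups_Big_Fun"
begin

text \<open>An element sum_{k,m} C k m x^k (d/dx)^m of PsiD is represented by its coefficient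
  function C; membership in PsiD means the support is bounded above in both indices.\<close>

definition psd :: "(int \<Rightarrow> int \<Rightarrow> complex) \<Rightarrow> bool" where
  "psd C \<longleftrightarrow> (\<exists>K M. \<forall>k m. (k > K \<or> m > M) \<longrightarrow> C k m = 0)"

definition ffact_int :: "int \<Rightarrow> nat \<Rightarrow> int" where
  "ffact_int a j = (\<Prod>i<j. a - int i)"

text \<open>Product: x^k1 d^m1 * x^k2 d^m2 = sum_j (m1)_j (k2)_j / j! x^(k1+k2-j) d^(m1+m2-j).
  The coefficient of x^k d^m is a sum over (k1,m1,j) with k2 = k+j-k1, m2 = m+j-m1;
  for elements of PsiD only finitely many terms are nonzero.\<close>
definition psd_mult ::
  "(int \<Rightarrow> int \<Rightarrow> complex) \<Rightarrow> (int \<Rightarrow> int \<Rightarrow> complex) \<Rightarrow> int \<Rightarrow> int \<Rightarrow> complex" where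
  "psd_mult A B k m =
     Sum_any (\<lambda>(k1::int, m1::int, j::nat).
        A k1 m1 * B (k + int j - k1) (m + int j - m1) *
        of_int (ffact_int m1 j * ffact_int (k + int j - k1) j) / of_nat (fact j))"

definition psd_one :: "int \<Rightarrow> int \<Rightarrow> complex" where
  "psd_one k m = (if k = 0 \<and> m = 0 then 1 else 0)"

definition psd_invertible :: "(int \<Rightarrow> int \<Rightarrow> complex) \<Rightarrow> bool" where
  "psd_invertible D \<longleftrightarrow> (\<exists>E. psd E \<and> psd_mult D E = psd_one \<and> psd_mult E D = psd_one)"

end

theory Submission
  imports Defs "HOL-Library.Product_Order" "HOL-Library.Product_Plus"
    "HOL-Computational_Algebra.Formal_Power_Series"
begin

text \<open>
  Coefficient functions on \<open>\<int>\<^sup>2\<close> are multiplied bilinearly through structure constants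
  \<open>psd_struct a b q\<close>, the coefficient of \<open>x\<^sup>k d\<^sup>m\<close>, \<open>q = (k, m)\<close>, in the product of the
  monomials with exponents \<open>a\<close> and \<open>b\<close>. These constants vanish unless \<open>a + b - q\<close> is a
  nonnegative multiple of \<open>(1, 1)\<close>, and they equal \<open>1\<close> when \<open>q = a + b\<close>. Hence, if the
  support of \<open>C\<close> lies below \<open>(K, M)\<close> and \<open>C\<^sub>K\<^sub>M \<noteq> 0\<close>, the equation \<open>C E = 1\<close> is
  triangular for the componentwise order and can be solved coefficient by coefficient, by
  well-founded recursion. Exchanging the roles of \<open>x\<close> and \<open>d\<close> reverses products, so a right
  inverse of the transposed operator yields a left inverse of \<open>C\<close>. Associativity, which on
  monomials reduces to Vandermonde's identity for falling factorials, makes the two inverses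
  coincide.
\<close>

section \<open>Sums over finite supports\<close>

text \<open>Without zero divisors, multiplication by \<open>r \<noteq> 0\<close> keeps infinite supports infinite,
  so no finiteness hypothesis is needed.\<close>

lemma Sum_any_mult_right:
  fixes r :: "'a::semiring_no_zero_divisors"
  shows "Sum_any g * r = Sum_any (\<lambda>a. g a * r)"
proof (cases "r = 0 \<or> finite {a. g a \<noteq> 0}")
  case True
  then show ?thesis by (auto simp: Sum_any_left_distrib)
next
  case False
  then have "infinite {a. g a * r \<noteq> 0}" by simp
  with False show ?thesis by simp
qed

lemma Sum_any_mult_left:
  fixes r :: "'a::semiring_no_zero_divisors"
  shows "r * Sum_any g = Sum_any (\<lambda>a. r * g a)"
proof (cases "r = 0 \<or> finite {a. g a \<noteq> 0}")
  case True
  then show ?thesis by (auto simp: Sum_any_right_distrib)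
next
  case False
  then have "infinite {a. r * g a \<noteq> 0}" by simp
  with False show ?thesis by simp
qed

lemma Sum_any_curry:
  assumes "finite {(a, b). g a b \<noteq> 0}"
  shows "Sum_any (\<lambda>a. Sum_any (g a)) = Sum_any (\<lambda>(a, b). g a b)"
proof (rule Sum_any.cartesian_product)
  let ?S = "{(a, b). g a b \<noteq> 0}"
  show "finite (fst ` ?S \<times> snd ` ?S)" using assms by simp
  show "{a. \<exists>b. g a b \<noteq> 0} \<times> {b. \<exists>a. g a b \<noteq> 0} \<subseteq> fst ` ?S \<times> snd ` ?S"
    by force
qed

lemma Sum_any_reindex_inj:
  assumes "inj l" and "\<And>x. x \<notin> range l \<Longrightarrow> g x = 0"
  shows "Sum_any (g \<circ> l) = Sum_any g"
proof -
  let ?S = "{y. g (l y) \<noteq> 0}"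
  have supp: "{x. g x \<noteq> 0} = l ` ?S" using assms(2) by (auto simp: image_iff) (metis rangeE)
  show ?thesis
  proof (cases "finite ?S")
    case True
    then show ?thesis
      using assms(1) by (simp add: supp Sum_any.expand_set sum.reindex inj_on_subset[of l UNIV])
  next
    case False
    moreover have "infinite {x. g x \<noteq> 0}"
      using False assms(1) by (simp add: supp finite_image_iff inj_on_subset[of l UNIV])
    ultimately show ?thesis by (simp add: comp_def)
  qed
qed

lemma Sum_any_eq_single:
  assumes "\<And>x. x \<noteq> t \<Longrightarrow> g x = 0"
  shows "Sum_any g = g t"
proof -
  have "g = (\<lambda>x. if x = t then g x else 0)" using assms by auto
  then show ?thesis by (metis Sum_any.delta)
qed

section \<open>Products given by structure constants\<close>

definition struct_mult ::
  "('i \<Rightarrow> 'i \<Rightarrow> 'i \<Rightarrow> 'a::comm_semiring_1) \<Rightarrow> ('i \<Rightarrow> 'a) \<Rightarrow> ('i \<Rightarrow> 'a) \<Rightarrow> 'i \<Rightarrow> 'a" where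
  "struct_mult \<sigma> A B q = Sum_any (\<lambda>(a, b). A a * B b * \<sigma> a b q)"

lemma struct_mult_commute: "struct_mult \<sigma> A B q = struct_mult (\<lambda>a b. \<sigma> b a) B A q"
  unfolding struct_mult_def
  by (rule Sum_any.reindex_cong[of prod.swap]) (auto simp: fun_eq_iff mult_ac)

lemma struct_mult_nested_left:
  fixes \<sigma> :: "'i \<Rightarrow> 'i \<Rightarrow> 'i \<Rightarrow> 'a::{comm_semiring_1, semiring_no_zero_divisors}"
  assumes fin: "finite {(a, b, c, p). A a * B b * C c * \<sigma> a b p * \<sigma> p c q \<noteq> 0}"
  shows "struct_mult \<sigma> (struct_mult \<sigma> A B) C q =
    Sum_any (\<lambda>(a, b, c). A a * B b * C c * Sum_any (\<lambda>p. \<sigma> a b p * \<sigma> p c q))"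
proof -
  define h where "h = (\<lambda>(a, b, c) p. A a * B b * C c * (\<sigma> a b p * \<sigma> p c q))"
  define g where "g = (\<lambda>(p, c) (a, b). h (a, b, c) p)"
  have fin_h: "finite {(abc, p). h abc p \<noteq> 0}"
  proof -
    have "{(abc, p). h abc p \<noteq> 0} = (\<lambda>(a, b, c, p). ((a, b, c), p)) `
        {(a, b, c, p). A a * B b * C c * \<sigma> a b p * \<sigma> p c q \<noteq> 0}"
      by (force simp: h_def mult_ac)
    then show ?thesis using fin by simp
  qed
  have "struct_mult \<sigma> (struct_mult \<sigma> A B) C q = Sum_any (\<lambda>pc. Sum_any (g pc))"
    unfolding struct_mult_def
    by (intro Sum_any.cong) (auto simp only: mult.assoc Sum_any_mult_right intro!: Sum_any.cong,
        auto simp: g_def h_def mult_ac)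
  also have "\<dots> = Sum_any (\<lambda>(pc, ab). g pc ab)"
  proof (rule Sum_any_curry)
    have "{(pc, ab). g pc ab \<noteq> 0} = (\<lambda>((a, b, c), p). ((p, c), (a, b))) ` {(abc, p). h abc p \<noteq> 0}"
      by (force simp: g_def)
    then show "finite {(pc, ab). g pc ab \<noteq> 0}" using fin_h by simp
  qed
  also have "\<dots> = Sum_any (\<lambda>(abc, p). h abc p)"
    by (rule Sum_any.reindex_cong[of "\<lambda>((a, b, c), p). ((p, c), (a, b))"])
      (auto simp: bij_def inj_def image_def fun_eq_iff g_def)
  also have "\<dots> = Sum_any (\<lambda>abc. Sum_any (h abc))"
    using fin_h by (rule Sum_any_curry[symmetric])
  also have "\<dots> = Sum_any (\<lambda>(a, b, c). A a * B b * C c * Sum_any (\<lambda>p. \<sigma> a b p * \<sigma> p c q))"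
    by (intro Sum_any.cong) (auto simp: h_def Sum_any_mult_left)
  finally show ?thesis .
qed

text \<open>The hypothesis \<open>fin_right\<close> is \<open>fin_left\<close> for the opposite structure constants
  \<open>\<lambda>a b. \<sigma> b a\<close> and the factors in reverse order.\<close>

lemma struct_mult_assoc:
  fixes \<sigma> :: "'i \<Rightarrow> 'i \<Rightarrow> 'i \<Rightarrow> 'a::{comm_semiring_1, semiring_no_zero_divisors}"
  assumes fin_left: "finite {(a, b, c, p). A a * B b * C c * \<sigma> a b p * \<sigma> p c q \<noteq> 0}"
    and fin_right: "finite {(c, b, a, p). C c * B b * A a * \<sigma> b c p * \<sigma> a p q \<noteq> 0}"
    and assoc: "\<And>a b c. Sum_any (\<lambda>p. \<sigma> a b p * \<sigma> p c q) = Sum_any (\<lambda>p. \<sigma> b c p * \<sigma> a p q)"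
  shows "struct_mult \<sigma> (struct_mult \<sigma> A B) C q = struct_mult \<sigma> A (struct_mult \<sigma> B C) q"
proof -
  let ?\<tau> = "\<lambda>a b. \<sigma> b a"
  have "struct_mult \<sigma> A (struct_mult \<sigma> B C) q = struct_mult ?\<tau> (struct_mult ?\<tau> C B) A q"
  proof -
    have "struct_mult \<sigma> B C = struct_mult ?\<tau> C B"
      by (rule ext) (rule struct_mult_commute)
    then show ?thesis by (simp only: struct_mult_commute[of \<sigma> A])
  qed
  also have "\<dots> = Sum_any (\<lambda>(c, b, a). C c * B b * A a * Sum_any (\<lambda>p. \<sigma> b c p * \<sigma> a p q))"
    using fin_right by (rule struct_mult_nested_left)
  also have "\<dots> = Sum_any (\<lambda>(a, b, c). A a * B b * C c * Sum_any (\<lambda>p. \<sigma> a b p * \<sigma> p c q))"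
    by (rule Sum_any.reindex_cong[of "\<lambda>(a, b, c). (c, b, a)"])
      (auto simp: bij_def inj_def image_def fun_eq_iff assoc mult_ac)
  also have "\<dots> = struct_mult \<sigma> (struct_mult \<sigma> A B) C q"
    using fin_left by (rule struct_mult_nested_left[symmetric])
  finally show ?thesis ..
qed

lemma struct_mult_unit_left:
  assumes "\<And>b. \<sigma> e b q = (if b = q then 1 else 0)"
  shows "struct_mult \<sigma> (\<lambda>a. if a = e then 1 else 0) B q = B q"
  unfolding struct_mult_def
  by (subst Sum_any_eq_single[where t = "(e, q)"]) (auto simp: assms split: if_splits)

lemma struct_mult_unit_right:
  assumes "\<And>a. \<sigma> a e q = (if a = q then 1 else 0)"
  shows "struct_mult \<sigma> A (\<lambda>b. if b = e then 1 else 0) q = A q"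
  unfolding struct_mult_def
  by (subst Sum_any_eq_single[where t = "(q, e)"]) (auto simp: assms split: if_splits)

lemma struct_mult_transpose:
  assumes "\<And>a b. \<sigma> (prod.swap b) (prod.swap a) (prod.swap q) = \<sigma> a b q"
  shows "struct_mult \<sigma> (B \<circ> prod.swap) (A \<circ> prod.swap) (prod.swap q) = struct_mult \<sigma> A B q"
  unfolding struct_mult_def
  by (rule Sum_any.reindex_cong[of "\<lambda>(a, b). (prod.swap b, prod.swap a)"])
    (auto simp: bij_def inj_def image_def fun_eq_iff assms mult_ac)

section \<open>Falling factorials and reordering coefficients\<close>

lemma ffact_int_0 [simp]: "ffact_int a 0 = 1"
  by (simp add: ffact_int_def)

lemma ffact_int_Suc: "ffact_int a (Suc j) = ffact_int a j * (a - int j)"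
  by (simp add: ffact_int_def)

lemma ffact_int_add: "ffact_int a (i + j) = ffact_int a i * ffact_int (a - int i) j"
  by (induction j) (simp_all add: ffact_int_Suc algebra_simps)

lemma ffact_int_zero: "j > 0 \<Longrightarrow> ffact_int 0 j = 0"
  by (auto simp: ffact_int_def prod_zero_iff intro!: bexI[of _ 0])

lemma ffact_int_div_fact:
  "of_int (ffact_int a j) / fact j = (of_int a gchoose j :: 'a::field_char_0)"
proof -
  have "fact j * (of_int a gchoose j) = (\<Prod>i = 0..<j. (of_int a :: 'a) - of_nat i)"
    by (rule gbinomial_mult_fact)
  also have "\<dots> = of_int (ffact_int a j)"
    by (simp add: ffact_int_def atLeast0LessThan)
  finally show ?thesis by (simp add: field_simps)
qed

lemma ffact_int_Vandermonde:
  "of_int (ffact_int (a + b) n) / fact n =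
    (\<Sum>p\<le>n. of_int (ffact_int a p) / fact p * (of_int (ffact_int b (n - p)) / fact (n - p))
      :: 'a::field_char_0)"
  using gbinomial_Vandermonde[of "of_int a :: 'a" "of_int b" n]
  by (simp add: ffact_int_div_fact atLeast0AtMost)

definition reorder_coeff :: "int \<Rightarrow> nat \<Rightarrow> int \<Rightarrow> 'a::field_char_0" where
  "reorder_coeff m j k = of_int (ffact_int m j * ffact_int k j) / fact j"

lemma reorder_coeff_commute: "reorder_coeff m j k = reorder_coeff k j m"
  by (simp add: reorder_coeff_def mult.commute)

lemma reorder_coeff_0 [simp]: "reorder_coeff m 0 k = 1"
  by (simp add: reorder_coeff_def)

lemma reorder_coeff_zero_left: "j > 0 \<Longrightarrow> reorder_coeff 0 j k = 0"
  by (simp add: reorder_coeff_def ffact_int_zero)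

lemma reorder_coeff_sum_triangle:
  "(\<Sum>i\<le>n. reorder_coeff b i c * reorder_coeff (b + e - int i) (n - i) f) =
   (\<Sum>(\<alpha>, \<gamma>) \<in> {(\<alpha>, \<gamma>). \<gamma> \<le> \<alpha> \<and> \<alpha> \<le> n}.
      of_int (ffact_int b \<alpha> * ffact_int c \<gamma> * ffact_int e (n - \<alpha>) * ffact_int f (n - \<gamma>))
        / (fact \<gamma> * fact (\<alpha> - \<gamma>) * fact (n - \<alpha>)) :: 'a::field_char_0)"
  (is "_ = (\<Sum>(\<alpha>, \<gamma>) \<in> _. ?T \<alpha> \<gamma>)")
proof -
  have expand:
    "reorder_coeff b i c * reorder_coeff (b + e - int i) (n - i) f = (\<Sum>p\<le>n - i. ?T (i + p) i)"
    if "i \<le> n" for i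
  proof -
    have "reorder_coeff b i c * reorder_coeff (b + e - int i) (n - i) f =
        of_int (ffact_int b i * ffact_int c i) / fact i * of_int (ffact_int f (n - i)) *
        (of_int (ffact_int ((b - int i) + e) (n - i)) / fact (n - i))"
      by (simp add: reorder_coeff_def algebra_simps)
    also have "\<dots> = (\<Sum>p\<le>n - i.
        of_int (ffact_int b i * ffact_int c i) / fact i * of_int (ffact_int f (n - i)) *
        (of_int (ffact_int (b - int i) p) / fact p *
         (of_int (ffact_int e (n - i - p)) / fact (n - i - p))))"
      by (simp only: ffact_int_Vandermonde sum_distrib_left)
    also have "\<dots> = (\<Sum>p\<le>n - i. ?T (i + p) i)"
    proof (intro sum.cong refl)
      fix p
      have "(of_int (ffact_int b (i + p)) :: 'a) =
          of_int (ffact_int b i) * of_int (ffact_int (b - int i) p)"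
        by (simp add: ffact_int_add)
      then show "of_int (ffact_int b i * ffact_int c i) / fact i * of_int (ffact_int f (n - i)) *
          (of_int (ffact_int (b - int i) p) / fact p *
           (of_int (ffact_int e (n - i - p)) / fact (n - i - p)))
          = ?T (i + p) i"
        by (simp add: field_simps diff_diff_add)
    qed
    finally show ?thesis .
  qed
  have "(\<Sum>i\<le>n. reorder_coeff b i c * reorder_coeff (b + e - int i) (n - i) f) =
      (\<Sum>i\<le>n. \<Sum>p\<le>n - i. ?T (i + p) i)"
    by (intro sum.cong refl) (simp add: expand)
  also have "\<dots> = (\<Sum>(i, p) \<in> (SIGMA i:{..n}. {..n - i}). ?T (i + p) i)"
    by (rule sum.Sigma) auto
  also have "\<dots> = (\<Sum>(\<alpha>, \<gamma>) \<in> {(\<alpha>, \<gamma>). \<gamma> \<le> \<alpha> \<and> \<alpha> \<le> n}. ?T \<alpha> \<gamma>)"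
    by (rule sum.reindex_bij_witness[of _ "\<lambda>(\<alpha>, \<gamma>). (\<gamma>, \<alpha> - \<gamma>)" "\<lambda>(i, p). (i + p, i)"]) auto
  finally show ?thesis .
qed

text \<open>The right-hand side is the left-hand side for \<open>(f, e, c, b)\<close>, and the triangle sum
  of \<open>reorder_coeff_sum_triangle\<close> is invariant under this substitution combined with
  \<open>(\<alpha>, \<gamma>) \<mapsto> (n - \<gamma>, n - \<alpha>)\<close>.\<close>

lemma reorder_coeff_assoc:
  "(\<Sum>i\<le>n. reorder_coeff b i c * reorder_coeff (b + e - int i) (n - i) f) =
   (\<Sum>i\<le>n. reorder_coeff e i f * reorder_coeff b (n - i) (c + f - int i) :: 'a::field_char_0)"
proof -
  have "(\<Sum>i\<le>n. reorder_coeff e i f * reorder_coeff b (n - i) (c + f - int i) :: 'a) =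
      (\<Sum>i\<le>n. reorder_coeff f i e * reorder_coeff (f + c - int i) (n - i) b)"
    by (intro sum.cong refl)
      (simp add: reorder_coeff_commute[of e] reorder_coeff_commute[of b] add.commute)
  also have "\<dots> = (\<Sum>(\<alpha>, \<gamma>) \<in> {(\<alpha>, \<gamma>). \<gamma> \<le> \<alpha> \<and> \<alpha> \<le> n}.
      of_int (ffact_int f \<alpha> * ffact_int e \<gamma> * ffact_int c (n - \<alpha>) * ffact_int b (n - \<gamma>))
        / (fact \<gamma> * fact (\<alpha> - \<gamma>) * fact (n - \<alpha>)))"
    by (rule reorder_coeff_sum_triangle)
  also have "\<dots> = (\<Sum>(\<alpha>, \<gamma>) \<in> {(\<alpha>, \<gamma>). \<gamma> \<le> \<alpha> \<and> \<alpha> \<le> n}.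
      of_int (ffact_int b \<alpha> * ffact_int c \<gamma> * ffact_int e (n - \<alpha>) * ffact_int f (n - \<gamma>))
        / (fact \<gamma> * fact (\<alpha> - \<gamma>) * fact (n - \<alpha>)))"
    by (rule sum.reindex_bij_witness[of _ "\<lambda>(\<alpha>, \<gamma>). (n - \<gamma>, n - \<alpha>)" "\<lambda>(\<alpha>, \<gamma>). (n - \<gamma>, n - \<alpha>)"])
      (auto simp: mult_ac)
  also have "\<dots> = (\<Sum>i\<le>n. reorder_coeff b i c * reorder_coeff (b + e - int i) (n - i) f)"
    by (rule reorder_coeff_sum_triangle[symmetric])
  finally show ?thesis ..
qed

section \<open>Structure constants of pseudodifferential operators\<close>

text \<open>By the defining relation, \<open>x^k1 d^m1 * x^k2 d^m2\<close> equals
  \<open>\<Sum>j. reorder_coeff m1 j k2 * x^(k1 + k2 - j) d^(m1 + m2 - j)\<close>.\<close>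

fun psd_struct :: "int \<times> int \<Rightarrow> int \<times> int \<Rightarrow> int \<times> int \<Rightarrow> 'a::field_char_0" where
  "psd_struct (k1, m1) (k2, m2) (k, m) =
     (if k1 + k2 - k = m1 + m2 - m \<and> k \<le> k1 + k2
      then reorder_coeff m1 (nat (k1 + k2 - k)) k2 else 0)"

lemma psd_struct_nonzero:
  assumes "psd_struct a b q \<noteq> 0"
  obtains j :: nat where "a + b = q + (int j, int j)"
proof -
  obtain k1 m1 k2 m2 k m where "a = (k1, m1)" "b = (k2, m2)" "q = (k, m)"
    by (cases a, cases b, cases q) auto
  with assms show thesis
    by (intro that[of "nat (k1 + k2 - k)"]) (auto split: if_splits)
qed

lemma psd_struct_diag: "psd_struct a b (a + b - (int j, int j)) = reorder_coeff (snd a) j (fst b)"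
  by (cases a, cases b) simp

lemma psd_struct_leading: "psd_struct a b (a + b) = 1"
  using psd_struct_diag[of a b 0] by (simp add: zero_prod_def[symmetric])

lemma psd_struct_unit_left: "psd_struct 0 b q = (if b = q then 1 else 0)"
  by (cases b, cases q) (auto simp: zero_prod_def reorder_coeff_zero_left)

lemma psd_struct_unit_right: "psd_struct a 0 q = (if a = q then 1 else 0)"
  by (cases a, cases q)
    (auto simp: zero_prod_def reorder_coeff_commute[where k = 0] reorder_coeff_zero_left)

lemma psd_struct_transpose:
  "psd_struct (prod.swap b) (prod.swap a) (prod.swap q) = psd_struct a b q"
  by (cases a, cases b, cases q) (auto simp: reorder_coeff_commute add.commute)

lemma Sum_any_psd_struct_left:
  "Sum_any (\<lambda>p. psd_struct a b p * g p) =
    Sum_any (\<lambda>j. reorder_coeff (snd a) j (fst b) * g (a + b - (int j, int j)))"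
proof -
  let ?l = "\<lambda>j::nat. a + b - (int j, int j)"
  have "inj ?l" by (auto simp: inj_def)
  moreover have "psd_struct a b p * g p = 0" if "p \<notin> range ?l" for p
    using that
    by (metis (no_types, lifting) add_diff_cancel_right' mult_eq_0_iff psd_struct_nonzero rangeI)
  ultimately show ?thesis
    using Sum_any_reindex_inj[of ?l "\<lambda>p. psd_struct a b p * g p"]
    by (simp add: comp_def psd_struct_diag)
qed

lemma psd_struct_assoc:
  "Sum_any (\<lambda>p. psd_struct a b p * psd_struct p c q) =
    Sum_any (\<lambda>p. psd_struct b c p * psd_struct a p q)"
proof -
  obtain k1 m1 k2 m2 k3 m3 k m where abcq: "a = (k1, m1)" "b = (k2, m2)" "c = (k3, m3)" "q = (k, m)"
    by (cases a, cases b, cases c, cases q) auto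
  let ?n = "nat (k1 + k2 + k3 - k)"
  let ?diag = "k1 + k2 + k3 - k = m1 + m2 + m3 - m \<and> k \<le> k1 + k2 + k3"
  let ?L = "\<lambda>i. reorder_coeff m1 i k2 * reorder_coeff (m1 + m2 - int i) (?n - i) k3"
  let ?R = "\<lambda>i. reorder_coeff m2 i k3 * reorder_coeff m1 (?n - i) (k2 + k3 - int i)"
  have nat_shift: "nat (k1 + (k2 + k3) - (k + int i)) = nat (k1 + (k2 + k3) - k) - i" for i
    by arith
  have "Sum_any (\<lambda>p. psd_struct a b p * psd_struct p c q) =
      Sum_any (\<lambda>i. if ?diag \<and> i \<le> ?n then ?L i else 0)"
    unfolding Sum_any_psd_struct_left
    by (intro Sum_any.cong) (auto simp: abcq nat_shift algebra_simps)
  also have "\<dots> = (if ?diag then \<Sum>i\<le>?n. ?L i else 0)"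
    by (subst Sum_any.expand_superset[of "{..?n}"]) auto
  also have "\<dots> = (if ?diag then \<Sum>i\<le>?n. ?R i else 0)"
    by (simp only: reorder_coeff_assoc)
  also have "\<dots> = Sum_any (\<lambda>i. if ?diag \<and> i \<le> ?n then ?R i else 0)"
    by (subst Sum_any.expand_superset[of "{..?n}"]) auto
  also have "\<dots> = Sum_any (\<lambda>p. psd_struct b c p * psd_struct a p q)"
    unfolding Sum_any_psd_struct_left
    by (intro Sum_any.cong) (auto simp: abcq nat_shift algebra_simps)
  finally show ?thesis .
qed

lemma psd_mult_eq_struct_mult:
  "psd_mult A B k m = struct_mult psd_struct (case_prod A) (case_prod B) (k, m)"
proof -
  let ?l = "\<lambda>(k1, m1, j::nat). ((k1, m1), (k + int j - k1, m + int j - m1))"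
  let ?g = "\<lambda>(a, b). case_prod A a * case_prod B b * psd_struct a b (k, m)"
  have "inj ?l" by (auto simp: inj_def)
  moreover have "?g x = 0" if "x \<notin> range ?l" for x
  proof (rule ccontr)
    obtain a b where x: "x = (a, b)" by (cases x)
    assume "?g x \<noteq> 0"
    then have "(psd_struct a b (k, m) :: complex) \<noteq> 0" by (auto simp: x)
    then obtain j where "a + b = (k, m) + (int j, int j)" by (rule psd_struct_nonzero)
    then have "x = ?l (fst a, snd a, j)"
      by (cases a, cases b) (auto simp: x algebra_simps)
    with that show False by blast
  qed
  ultimately have "Sum_any (?g \<circ> ?l) = Sum_any ?g" by (rule Sum_any_reindex_inj)
  moreover have "?g \<circ> ?l = (\<lambda>(k1, m1, j). A k1 m1 * B (k + int j - k1) (m + int j - m1) *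
      of_int (ffact_int m1 j * ffact_int (k + int j - k1) j) / of_nat (fact j))"
    by (auto simp: fun_eq_iff reorder_coeff_def)
  ultimately show ?thesis
    by (simp add: psd_mult_def struct_mult_def)
qed

section \<open>Bounded supports and triangular inversion\<close>

definition support_below :: "('i::order \<Rightarrow> 'a::zero) \<Rightarrow> 'i \<Rightarrow> bool" where
  "support_below A u \<longleftrightarrow> (\<forall>a. A a \<noteq> 0 \<longrightarrow> a \<le> u)"

definition struct_graded :: "(int \<times> int \<Rightarrow> int \<times> int \<Rightarrow> int \<times> int \<Rightarrow> 'a::zero) \<Rightarrow> bool" where
  "struct_graded \<sigma> \<longleftrightarrow> (\<forall>a b p. \<sigma> a b p \<noteq> 0 \<longrightarrow> (\<exists>j::nat. a + b = p + (int j, int j)))"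

lemma support_below_case_prod:
  fixes C :: "'a::linorder \<Rightarrow> 'b::linorder \<Rightarrow> 'c::zero"
  shows "support_below (case_prod C) (K, M) \<longleftrightarrow> (\<forall>k m. (k > K \<or> m > M) \<longrightarrow> C k m = 0)"
  unfolding support_below_def by (auto simp: split_paired_All) (metis not_le)+

lemma support_belowD: "support_below A u \<Longrightarrow> A a \<noteq> 0 \<Longrightarrow> a \<le> u"
  by (simp add: support_below_def)

lemma struct_gradedE:
  assumes "struct_graded \<sigma>" and "\<sigma> a b p \<noteq> 0"
  obtains j :: nat where "a + b = p + (int j, int j)"
  using assms unfolding struct_graded_def by blast

lemma struct_graded_psd_struct: "struct_graded psd_struct"
  unfolding struct_graded_def by (metis psd_struct_nonzero)

lemma struct_graded_flip:
  assumes "struct_graded \<sigma>"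
  shows "struct_graded (\<lambda>a b. \<sigma> b a)"
  unfolding struct_graded_def
proof (intro allI impI)
  fix a b p assume "\<sigma> b a p \<noteq> 0"
  with assms obtain j :: nat where "b + a = p + (int j, int j)"
    unfolding struct_graded_def by blast
  then show "\<exists>j::nat. a + b = p + (int j, int j)" by (auto simp: add.commute)
qed

lemma support_below_swap: "support_below A u \<Longrightarrow> support_below (A \<circ> prod.swap) (prod.swap u)"
  unfolding support_below_def by (auto simp: less_eq_prod_def)

lemma finite_struct_mult_support:
  fixes \<sigma> :: "int \<times> int \<Rightarrow> int \<times> int \<Rightarrow> int \<times> int \<Rightarrow> 'a::comm_semiring_1"
  assumes \<sigma>: "struct_graded \<sigma>" and A: "support_below A \<alpha>" and B: "support_below B \<beta>"
  shows "finite {(a, b). A a * B b * \<sigma> a b q \<noteq> 0}"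
proof (rule finite_subset)
  show "{(a, b). A a * B b * \<sigma> a b q \<noteq> 0} \<subseteq> {q - \<beta>..\<alpha>} \<times> {q - \<alpha>..\<beta>}"
  proof clarify
    fix a b assume "A a * B b * \<sigma> a b q \<noteq> 0"
    then have "A a \<noteq> 0" "B b \<noteq> 0" "\<sigma> a b q \<noteq> 0" by auto
    then have "a \<le> \<alpha>" "b \<le> \<beta>" using A B by (auto intro: support_belowD)
    moreover obtain j :: nat where "a + b = q + (int j, int j)"
      using \<sigma> \<open>\<sigma> a b q \<noteq> 0\<close> by (rule struct_gradedE)
    ultimately show "a \<in> {q - \<beta>..\<alpha>} \<and> b \<in> {q - \<alpha>..\<beta>}"
      by (cases a, cases b, cases q) (auto simp: less_eq_prod_def)
  qed
qed (simp add: atLeastAtMost_prod_eq)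

lemma finite_struct_assoc_support:
  fixes \<sigma> :: "int \<times> int \<Rightarrow> int \<times> int \<Rightarrow> int \<times> int \<Rightarrow> 'a::comm_semiring_1"
  assumes \<sigma>: "struct_graded \<sigma>"
    and A: "support_below A \<alpha>" and B: "support_below B \<beta>" and C: "support_below C \<gamma>"
  shows "finite {(a, b, c, p). A a * B b * C c * \<sigma> a b p * \<sigma> p c q \<noteq> 0}"
proof (rule finite_subset)
  show "{(a, b, c, p). A a * B b * C c * \<sigma> a b p * \<sigma> p c q \<noteq> 0} \<subseteq>
      {q - \<beta> - \<gamma>..\<alpha>} \<times> {q - \<alpha> - \<gamma>..\<beta>} \<times> {q - \<alpha> - \<beta>..\<gamma>} \<times> {q - \<gamma>..\<alpha> + \<beta>}"
  proof
    fix x assume "x \<in> {(a, b, c, p). A a * B b * C c * \<sigma> a b p * \<sigma> p c q \<noteq> 0}"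
    then obtain a b c p where x: "x = (a, b, c, p)"
      and nz: "A a * B b * C c * \<sigma> a b p * \<sigma> p c q \<noteq> 0"
      by auto
    then have "A a \<noteq> 0" "B b \<noteq> 0" "C c \<noteq> 0" "\<sigma> a b p \<noteq> 0" "\<sigma> p c q \<noteq> 0" by auto
    then have "a \<le> \<alpha>" "b \<le> \<beta>" "c \<le> \<gamma>" using A B C by (auto intro: support_belowD)
    moreover obtain i j :: nat where "a + b = p + (int i, int i)" "p + c = q + (int j, int j)"
      using \<sigma> \<open>\<sigma> a b p \<noteq> 0\<close> \<open>\<sigma> p c q \<noteq> 0\<close> by (metis struct_gradedE)
    ultimately show "x \<in> {q - \<beta> - \<gamma>..\<alpha>} \<times> {q - \<alpha> - \<gamma>..\<beta>} \<times> {q - \<alpha> - \<beta>..\<gamma>} \<times> {q - \<gamma>..\<alpha> + \<beta>}"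
      unfolding x by (cases a, cases b, cases c, cases p, cases q) (auto simp: less_eq_prod_def)
  qed
qed (simp add: atLeastAtMost_prod_eq)

lemma support_below_struct_mult:
  fixes \<sigma> :: "int \<times> int \<Rightarrow> int \<times> int \<Rightarrow> int \<times> int \<Rightarrow> 'a::comm_semiring_1"
  assumes \<sigma>: "struct_graded \<sigma>" and A: "support_below A \<alpha>" and B: "support_below B \<beta>"
  shows "support_below (struct_mult \<sigma> A B) (\<alpha> + \<beta>)"
  unfolding support_below_def
proof (intro allI impI)
  fix q assume "struct_mult \<sigma> A B q \<noteq> 0"
  then obtain a b where "A a * B b * \<sigma> a b q \<noteq> 0"
    unfolding struct_mult_def by (auto elim: Sum_any.not_neutral_obtains_not_neutral)
  then have "A a \<noteq> 0" "B b \<noteq> 0" "\<sigma> a b q \<noteq> 0" by auto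
  then have "a \<le> \<alpha>" "b \<le> \<beta>" using A B by (auto intro: support_belowD)
  moreover obtain j :: nat where "a + b = q + (int j, int j)"
    using \<sigma> \<open>\<sigma> a b q \<noteq> 0\<close> by (rule struct_gradedE)
  ultimately show "q \<le> \<alpha> + \<beta>"
    by (cases a, cases b, cases q) (auto simp: less_eq_prod_def)
qed

lemma struct_mult_triangular:
  fixes \<sigma> :: "int \<times> int \<Rightarrow> int \<times> int \<Rightarrow> int \<times> int \<Rightarrow> 'a::comm_semiring_1"
  assumes \<sigma>: "struct_graded \<sigma>" and leading: "\<And>a b. \<sigma> a b (a + b) = 1"
    and C: "support_below C u" and E: "support_below E w"
  shows "struct_mult \<sigma> C E (u + b) = C u * E b +
    Sum_any (\<lambda>(a, b'). if b \<le> b' \<and> b' \<le> w \<and> b' \<noteq> b then C a * E b' * \<sigma> a b' (u + b) else 0)"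
proof -
  let ?f = "\<lambda>(a, b'). C a * E b' * \<sigma> a b' (u + b)"
  let ?g = "\<lambda>(a, b'). if b \<le> b' \<and> b' \<le> w \<and> b' \<noteq> b then C a * E b' * \<sigma> a b' (u + b) else 0"
  have f_eq_at: "?f (a, b') = (?g((u, b) := C u * E b)) (a, b')" for a b'
  proof (cases "(a, b') = (u, b) \<or> b \<le> b' \<and> b' \<le> w \<and> b' \<noteq> b")
    case True
    then show ?thesis by (auto simp: leading)
  next
    case False
    have "C a * E b' * \<sigma> a b' (u + b) = 0"
    proof (rule ccontr)
      assume "C a * E b' * \<sigma> a b' (u + b) \<noteq> 0"
      then have "C a \<noteq> 0" "E b' \<noteq> 0" "\<sigma> a b' (u + b) \<noteq> 0" by auto
      then have "a \<le> u" "b' \<le> w" using C E by (auto intro: support_belowD)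
      moreover obtain j :: nat where "a + b' = u + b + (int j, int j)"
        using \<sigma> \<open>\<sigma> a b' (u + b) \<noteq> 0\<close> by (rule struct_gradedE)
      ultimately show False using False
        by (cases a, cases b, cases b', cases u) (auto simp: less_eq_prod_def)
    qed
    with False show ?thesis by auto
  qed
  have f_eq: "?f = ?g((u, b) := C u * E b)"
  proof
    fix x
    show "?f x = (?g((u, b) := C u * E b)) x"
      using f_eq_at[of "fst x" "snd x"] by simp
  qed
  have "finite {x. ?f x \<noteq> 0}"
    using finite_struct_mult_support[OF \<sigma> C E] by (simp add: split_def)
  then have "finite {x. ?g x \<noteq> 0}"
    by (rule finite_subset[rotated]) (auto split: if_splits)
  then have "Sum_any ?f = C u * E b + Sum_any ?g"
    unfolding f_eq by (rule Sum_any.update) simp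
  then show ?thesis by (simp add: struct_mult_def)
qed

lemma struct_mult_solve_right:
  fixes \<sigma> :: "int \<times> int \<Rightarrow> int \<times> int \<Rightarrow> int \<times> int \<Rightarrow> 'a::field"
  assumes \<sigma>: "struct_graded \<sigma>" and leading: "\<And>a b. \<sigma> a b (a + b) = 1"
    and C: "support_below C u" "C u \<noteq> 0" and D: "support_below D v"
  shows "\<exists>E. support_below E (v - u) \<and> struct_mult \<sigma> C E = D"
proof -
  define w where "w = v - u"
  txt \<open>By \<open>struct_mult_triangular\<close>, the coefficient of \<open>u + b\<close> in \<open>C E\<close> involves, besides
    \<open>C u * E b\<close>, only the \<open>E b'\<close> with \<open>(b', b) \<in> R\<close>, so \<open>E\<close> is defined by recursion along \<open>R\<close>.\<close>
  define R where "R = {(b', b). b \<le> b' \<and> b' \<le> w \<and> b' \<noteq> b}"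
  have "wf R"
  proof (rule wf_subset[OF wf_measure])
    show "R \<subseteq> measure (\<lambda>b. nat (fst w - fst b + (snd w - snd b)))"
      by (auto simp: R_def less_eq_prod_def prod_eq_iff)
  qed
  define F where "F g b = (if b \<le> w then
      (D (u + b) - Sum_any (\<lambda>(a, b'). if (b', b) \<in> R then C a * g b' * \<sigma> a b' (u + b) else 0)) / C u
      else 0)" for g b
  define E where "E = wfrec R F"
  have "adm_wf R F"
    unfolding adm_wf_def F_def by (auto intro!: Sum_any.cong)
  then have "E = F E"
    unfolding E_def by (rule wfrec_fixpoint[OF \<open>wf R\<close>])
  then have E_eq: "E b = F E b" for b
    by (rule fun_cong)
  have E: "support_below E w"
    unfolding support_below_def using E_eq by (auto simp: F_def)
  have "struct_mult \<sigma> C E q = D q" for q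
  proof (cases "q \<le> v")
    case False
    have "support_below (struct_mult \<sigma> C E) v"
      using support_below_struct_mult[OF \<sigma> C(1) E] by (simp add: w_def)
    with False D show ?thesis by (metis support_belowD)
  next
    case True
    then have "q - u \<le> w" by (auto simp: w_def less_eq_prod_def)
    with E_eq[of "q - u"] C(2) show ?thesis
      using struct_mult_triangular[OF \<sigma> leading C(1) E, of "q - u"] by (simp add: F_def R_def)
  qed
  then have "struct_mult \<sigma> C E = D" by (rule ext)
  with E show ?thesis unfolding w_def by blast
qed

lemma psd_struct_inverse:
  fixes C :: "int \<times> int \<Rightarrow> 'a::field_char_0"
  assumes C: "support_below C u" "C u \<noteq> 0"
  defines "\<delta> \<equiv> \<lambda>q. if q = 0 then 1 else 0"
  shows "\<exists>E. support_below E (- u) \<and>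
    struct_mult psd_struct C E = \<delta> \<and> struct_mult psd_struct E C = \<delta>"
proof -
  have \<delta>: "support_below \<delta> 0" by (simp add: support_below_def \<delta>_def)
  obtain E where E: "support_below E (- u)" and CE: "struct_mult psd_struct C E = \<delta>"
    using struct_mult_solve_right[OF struct_graded_psd_struct psd_struct_leading C \<delta>]
    unfolding diff_0 by blast
  have C': "support_below (C \<circ> prod.swap) (prod.swap u)" "(C \<circ> prod.swap) (prod.swap u) \<noteq> 0"
    using C by (simp_all add: support_below_swap)
  obtain E' where E': "support_below E' (- prod.swap u)"
    and C'E': "struct_mult psd_struct (C \<circ> prod.swap) E' = \<delta>"
    using struct_mult_solve_right[OF struct_graded_psd_struct psd_struct_leading C' \<delta>]
    unfolding diff_0 by blast
  define F where "F = E' \<circ> prod.swap"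
  have F: "support_below F (- u)"
    using support_below_swap[OF E'] by (cases u) (simp add: F_def)
  have FC: "struct_mult psd_struct F C = \<delta>"
  proof
    fix q
    have "struct_mult psd_struct F C q = struct_mult psd_struct (C \<circ> prod.swap) E' (prod.swap q)"
      by (simp add: F_def comp_assoc struct_mult_transpose[symmetric] psd_struct_transpose)
    also have "\<dots> = \<delta> q" by (cases q) (simp add: C'E' \<delta>_def zero_prod_def)
    finally show "struct_mult psd_struct F C q = \<delta> q" .
  qed
  have "F = E"
  proof
    fix q
    have fin_left:
        "finite {(a, b, c, p). F a * C b * E c * psd_struct a b p * psd_struct p c q \<noteq> 0}"
      by (rule finite_struct_assoc_support[OF struct_graded_psd_struct F C(1) E])
    have fin_right:
        "finite {(c, b, a, p). E c * C b * F a * psd_struct b c p * psd_struct a p q \<noteq> 0}"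
      using struct_graded_flip[OF struct_graded_psd_struct] E C(1) F
      by (rule finite_struct_assoc_support)
    have "F q = struct_mult psd_struct F (struct_mult psd_struct C E) q"
      by (simp add: CE \<delta>_def struct_mult_unit_right psd_struct_unit_right)
    also have "\<dots> = struct_mult psd_struct (struct_mult psd_struct F C) E q"
      by (rule struct_mult_assoc[OF fin_left fin_right psd_struct_assoc, symmetric])
    also have "\<dots> = E q"
      by (simp add: FC \<delta>_def struct_mult_unit_left psd_struct_unit_left)
    finally show "F q = E q" .
  qed
  with E CE FC show ?thesis by blast
qed

theorem lemma2p1:
  fixes C :: "int \<Rightarrow> int \<Rightarrow> complex" and K M :: int
  assumes "\<forall>k m. (k > K \<or> m > M) \<longrightarrow> C k m = 0"
    and "C K M \<noteq> 0"
  shows "psd_invertible C"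
proof -
  obtain E where E: "support_below E (- (K, M))"
    and CE: "struct_mult psd_struct (case_prod C) E = (\<lambda>q. if q = 0 then 1 else 0)"
    and EC: "struct_mult psd_struct E (case_prod C) = (\<lambda>q. if q = 0 then 1 else 0)"
    using psd_struct_inverse[of "case_prod C" "(K, M)"] assms
    by (auto simp: support_below_case_prod)
  have "psd (curry E)"
    using E support_below_case_prod[of "curry E" "- K" "- M"] unfolding psd_def by auto
  moreover have "psd_mult C (curry E) = psd_one" "psd_mult (curry E) C = psd_one"
    by (simp_all add: fun_eq_iff psd_mult_eq_struct_mult CE EC psd_one_def zero_prod_def)
  ultimately show ?thesis
    unfolding psd_invertible_def by blast
qed

end
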